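(* Let $R$ be a ring and $M$ a left $R$-module. Then $\xi(M)$ is hollow in $R\text{-}\mathrm{Tors}$ if and only if the set $\{\chi(M/N)\mid N\subsetneq M\text{ a submodule}\}$ is directed (any two members have an upper bound in the set).
   Context: $R\text{-}\mathrm{Tors}$ is the lattice of hereditary torsion theories on left $R$-modules, ordered by $\tau\leq\sigma$ iff the torsion class $\mathbb{T}_\tau\subseteq\mathbb{T}_\sigma$; $\bigwedge U$ is the theory with torsion class $\bigcap_{\tau\in U}\mathbb{T}_\tau$ and $\bigvee U$ the theory with torsionfree class $\bigcap_{\tau\in U}\mathbb{F}_\tau$. $\xi(M)$ is the least torsion theory for which $M$ is torsion, $\chi(M)$ the greatest for which $M$ is torsionfree. An element $\tau$ is hollow in $R\text{-}\mathrm{Tors}$ if it is irreducible in the dual lattice, i.e. for all $\alpha,\beta\leq\tau$ with $\tau\leq\alpha\vee\beta$ one has $\tau\leq\alpha$ or $\tau\leq\beta$. *)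

theory Defs
  imports "HOL-Algebra.Algebra"
begin

text \<open>Left modules over a (not necessarily commutative) ring.  The library locale
  module requires a commutative ring, so we use its axioms with ring R.\<close>

definition left_module :: "('a, 'c) ring_scheme \<Rightarrow> ('a, 'b, 'd) module_scheme \<Rightarrow> bool" where
  "left_module R M \<longleftrightarrow> ring R \<and> abelian_group M \<and> module_axioms R M"

definition left_submodule :: "('a, 'c) ring_scheme \<Rightarrow> ('a, 'b, 'd) module_scheme \<Rightarrow> 'b set \<Rightarrow> bool" where
  "left_submodule R M N \<longleftrightarrow> N \<subseteq> carrier M \<and> subgroup N (add_monoid M) \<and>
     (\<forall>r\<in>carrier R. \<forall>x\<in>N. r \<odot>\<^bsub>M\<^esub> x \<in> N)"

definition quot_module :: "('a, 'c) ring_scheme \<Rightarrow> ('a, 'b, 'd) module_scheme \<Rightarrow> 'b set \<Rightarrow> ('a, 'b set) module" where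
  "quot_module R M N =
     \<lparr> carrier = a_rcosets\<^bsub>M\<^esub> N,
       monoid.mult = (\<lambda>U V. N), monoid.one = N,
       ring.zero = N,
       ring.add = (\<lambda>U V. U <+>\<^bsub>M\<^esub> V),
       module.smult = (\<lambda>r U. \<Union>m\<in>U. N +>\<^bsub>M\<^esub> (r \<odot>\<^bsub>M\<^esub> m)) \<rparr>"

definition left_ideal :: "('a, 'c) ring_scheme \<Rightarrow> 'a set \<Rightarrow> bool" where
  "left_ideal R I \<longleftrightarrow> I \<subseteq> carrier R \<and> subgroup I (add_monoid R) \<and>
     (\<forall>r\<in>carrier R. \<forall>x\<in>I. r \<otimes>\<^bsub>R\<^esub> x \<in> I)"

definition lquot :: "('a, 'c) ring_scheme \<Rightarrow> 'a set \<Rightarrow> 'a \<Rightarrow> 'a set" where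
  "lquot R I a = {r \<in> carrier R. r \<otimes>\<^bsub>R\<^esub> a \<in> I}"

text \<open>Gabriel filters (Gabriel topologies) of left ideals; the lattice R-Tors of hereditary
  torsion theories is identified with the lattice of Gabriel filters ordered by inclusion
  (torsion class of F: modules all of whose elements have annihilator in F).\<close>
definition gabriel :: "('a, 'c) ring_scheme \<Rightarrow> 'a set set \<Rightarrow> bool" where
  "gabriel R F \<longleftrightarrow>
     (\<forall>I\<in>F. left_ideal R I) \<and> carrier R \<in> F \<and>
     (\<forall>I\<in>F. \<forall>J. left_ideal R J \<and> I \<subseteq> J \<longrightarrow> J \<in> F) \<and>
     (\<forall>I\<in>F. \<forall>J\<in>F. I \<inter> J \<in> F) \<and>
     (\<forall>I\<in>F. \<forall>a\<in>carrier R. lquot R I a \<in> F) \<and>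
     (\<forall>J. left_ideal R J \<and> (\<exists>I\<in>F. \<forall>a\<in>I. lquot R J a \<in> F) \<longrightarrow> J \<in> F)"

definition ann :: "('a, 'c) ring_scheme \<Rightarrow> ('a, 'b, 'd) module_scheme \<Rightarrow> 'b \<Rightarrow> 'a set" where
  "ann R M m = {r \<in> carrier R. r \<odot>\<^bsub>M\<^esub> m = \<zero>\<^bsub>M\<^esub>}"

definition is_torsion :: "('a, 'c) ring_scheme \<Rightarrow> 'a set set \<Rightarrow> ('a, 'b, 'd) module_scheme \<Rightarrow> bool" where
  "is_torsion R F M \<longleftrightarrow> (\<forall>m\<in>carrier M. ann R M m \<in> F)"

definition is_torsionfree :: "('a, 'c) ring_scheme \<Rightarrow> 'a set set \<Rightarrow> ('a, 'b, 'd) module_scheme \<Rightarrow> bool" where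
  "is_torsionfree R F M \<longleftrightarrow> (\<forall>m\<in>carrier M. ann R M m \<in> F \<longrightarrow> m = \<zero>\<^bsub>M\<^esub>)"

definition xi :: "('a, 'c) ring_scheme \<Rightarrow> ('a, 'b, 'd) module_scheme \<Rightarrow> 'a set set" where
  "xi R M = (LEAST F. gabriel R F \<and> is_torsion R F M)"

definition chi :: "('a, 'c) ring_scheme \<Rightarrow> ('a, 'b, 'd) module_scheme \<Rightarrow> 'a set set" where
  "chi R M = (GREATEST F. gabriel R F \<and> is_torsionfree R F M)"

definition tors_join :: "('a, 'c) ring_scheme \<Rightarrow> 'a set set \<Rightarrow> 'a set set \<Rightarrow> 'a set set" where
  "tors_join R A B = \<Inter>{G. gabriel R G \<and> A \<union> B \<subseteq> G}"

definition hollow :: "('a, 'c) ring_scheme \<Rightarrow> 'a set set \<Rightarrow> bool" where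
  "hollow R T \<longleftrightarrow> gabriel R T \<and>
     (\<forall>A B. gabriel R A \<and> gabriel R B \<and> A \<subseteq> T \<and> B \<subseteq> T \<and> T \<subseteq> tors_join R A B
        \<longrightarrow> T \<subseteq> A \<or> T \<subseteq> B)"

definition directed_set :: "'a set set set \<Rightarrow> bool" where
  "directed_set S \<longleftrightarrow> (\<forall>A\<in>S. \<forall>B\<in>S. \<exists>C\<in>S. A \<subseteq> C \<and> B \<subseteq> C)"

end

theory Submission
  imports Defs
begin

text \<open>For a Gabriel filter \<open>F\<close>, the module \<open>M\<close> fails to be \<open>F\<close>-torsion exactly when
  \<open>F \<subseteq> \<chi>(M/N)\<close> for some proper submodule \<open>N\<close>: take for \<open>N\<close> the \<open>F\<close>-torsion part of \<open>M\<close>,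
  so that \<open>M/N\<close> is \<open>F\<close>-torsionfree; conversely a nonzero \<open>F\<close>-torsionfree quotient stops \<open>M\<close>
  from being \<open>F\<close>-torsion.  So \<open>\<xi>(M) \<subseteq> F\<close> fails iff \<open>F\<close> lies below a member of
  \<open>S = {\<chi>(M/N) | N \<subset> M}\<close>.

  If \<open>S\<close> is directed, two filters \<open>A\<close>, \<open>B\<close> not above \<open>\<xi>(M)\<close> lie below a common member of \<open>S\<close>,
  hence so does their join, which is therefore not above \<open>\<xi>(M)\<close>.  If \<open>\<xi>(M)\<close> is hollow, the
  meets \<open>\<xi>(M) \<inter> \<chi>(M/N\<^sub>i)\<close> are not above \<open>\<xi>(M)\<close>, so neither is their join, which thus lies below
  some \<open>\<chi>(M/N\<^sub>3)\<close>; as every quotient of \<open>M\<close> is \<open>\<xi>(M)\<close>-torsion, \<open>\<xi>(M) \<inter> C \<subseteq> \<chi>(M/N\<^sub>3)\<close>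
  already forces \<open>C \<subseteq> \<chi>(M/N\<^sub>3)\<close>.\<close>

lemma comm_group_cong:
  assumes "comm_group G" "carrier H = carrier G" "monoid.mult H = monoid.mult G" "one H = one G"
  shows "comm_group H"
  using assms(1) unfolding comm_group_def comm_monoid_def comm_monoid_axioms_def group_def
    group_axioms_def monoid_def Units_def assms(2-4) .

context ring begin

lemma left_idealI:
  assumes "I \<subseteq> carrier R" "\<zero> \<in> I" "\<And>x y. x \<in> I \<Longrightarrow> y \<in> I \<Longrightarrow> x \<oplus> y \<in> I"
    "\<And>x. x \<in> I \<Longrightarrow> \<ominus> x \<in> I" "\<And>r x. r \<in> carrier R \<Longrightarrow> x \<in> I \<Longrightarrow> r \<otimes> x \<in> I"
  shows "left_ideal R I"
  unfolding left_ideal_def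
proof (intro conjI ballI)
  show "subgroup I (add_monoid R)"
    by (rule add.subgroupI) (use assms in \<open>auto simp: a_inv_def[symmetric]\<close>)
qed (use assms in auto)

lemma left_idealD:
  assumes "left_ideal R I"
  shows "I \<subseteq> carrier R" "\<zero> \<in> I" "\<And>x y. x \<in> I \<Longrightarrow> y \<in> I \<Longrightarrow> x \<oplus> y \<in> I"
    "\<And>x. x \<in> I \<Longrightarrow> \<ominus> x \<in> I" "\<And>r x. r \<in> carrier R \<Longrightarrow> x \<in> I \<Longrightarrow> r \<otimes> x \<in> I"
proof -
  interpret additive_subgroup I R
    using assms unfolding left_ideal_def additive_subgroup_def by auto
  show "I \<subseteq> carrier R" "\<zero> \<in> I" "\<And>x y. x \<in> I \<Longrightarrow> y \<in> I \<Longrightarrow> x \<oplus> y \<in> I"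
    "\<And>x. x \<in> I \<Longrightarrow> \<ominus> x \<in> I" by auto
  show "\<And>r x. r \<in> carrier R \<Longrightarrow> x \<in> I \<Longrightarrow> r \<otimes> x \<in> I"
    using assms unfolding left_ideal_def by auto
qed

lemma left_ideal_carrier: "left_ideal R (carrier R)"
  by (rule left_idealI) auto

lemma left_ideal_Int: "left_ideal R I \<Longrightarrow> left_ideal R J \<Longrightarrow> left_ideal R (I \<inter> J)"
  by (rule left_idealI) (auto dest: left_idealD)

lemma left_ideal_lquot:
  assumes I: "left_ideal R I" and a: "a \<in> carrier R"
  shows "left_ideal R (lquot R I a)"
proof (rule left_idealI)
  note I = left_idealD[OF I]
  show "lquot R I a \<subseteq> carrier R" "\<zero> \<in> lquot R I a"
    unfolding lquot_def using a I by auto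
  show "x \<oplus> y \<in> lquot R I a" if "x \<in> lquot R I a" "y \<in> lquot R I a" for x y
    using that a I(3) unfolding lquot_def by (auto simp: l_distr)
  show "\<ominus> x \<in> lquot R I a" if "x \<in> lquot R I a" for x
    using that a I(4) unfolding lquot_def by (auto simp: l_minus)
  show "r \<otimes> x \<in> lquot R I a" if "r \<in> carrier R" "x \<in> lquot R I a" for r x
    using that a I(5) unfolding lquot_def by (auto simp: m_assoc)
qed

lemma left_ideal_image_mult_right:
  assumes K: "left_ideal R K" and a: "a \<in> carrier R"
  shows "left_ideal R ((\<lambda>k. k \<otimes> a) ` K)"
proof (rule left_idealI)
  note K = left_idealD[OF K]
  show "(\<lambda>k. k \<otimes> a) ` K \<subseteq> carrier R" using K(1) a by auto
  show "\<zero> \<in> (\<lambda>k. k \<otimes> a) ` K" using K(2) a by (auto intro!: image_eqI[of _ _ \<zero>])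
  show "x \<oplus> y \<in> (\<lambda>k. k \<otimes> a) ` K" if xy: "x \<in> (\<lambda>k. k \<otimes> a) ` K" "y \<in> (\<lambda>k. k \<otimes> a) ` K" for x y
  proof -
    obtain k k' where "k \<in> K" "k' \<in> K" "x = k \<otimes> a" "y = k' \<otimes> a" using xy by auto
    then show ?thesis using K(1,3) a by (auto simp: l_distr subsetD intro!: image_eqI[of _ _ "k \<oplus> k'"])
  qed
  show "\<ominus> x \<in> (\<lambda>k. k \<otimes> a) ` K" if x: "x \<in> (\<lambda>k. k \<otimes> a) ` K" for x
  proof -
    obtain k where "k \<in> K" "x = k \<otimes> a" using x by auto
    then show ?thesis using K(1,4) a by (auto simp: l_minus subsetD intro!: image_eqI[of _ _ "\<ominus> k"])
  qed
  show "r \<otimes> x \<in> (\<lambda>k. k \<otimes> a) ` K" if r: "r \<in> carrier R" and x: "x \<in> (\<lambda>k. k \<otimes> a) ` K" for r x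
  proof -
    obtain k where "k \<in> K" "x = k \<otimes> a" using x by auto
    then show ?thesis using r K(1,5) a by (auto simp: m_assoc subsetD intro!: image_eqI[of _ _ "r \<otimes> k"])
  qed
qed

lemma gabriel_left_ideal: "gabriel R F \<Longrightarrow> I \<in> F \<Longrightarrow> left_ideal R I"
  unfolding gabriel_def by blast

lemma gabriel_carrier: "gabriel R F \<Longrightarrow> carrier R \<in> F"
  unfolding gabriel_def by blast

lemma gabriel_upward: "gabriel R F \<Longrightarrow> I \<in> F \<Longrightarrow> left_ideal R J \<Longrightarrow> I \<subseteq> J \<Longrightarrow> J \<in> F"
  unfolding gabriel_def by blast

lemma gabriel_Int_mem: "gabriel R F \<Longrightarrow> I \<in> F \<Longrightarrow> J \<in> F \<Longrightarrow> I \<inter> J \<in> F"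
  unfolding gabriel_def by blast

lemma gabriel_lquot: "gabriel R F \<Longrightarrow> I \<in> F \<Longrightarrow> a \<in> carrier R \<Longrightarrow> lquot R I a \<in> F"
  unfolding gabriel_def by blast

lemma gabriel_transitive:
  assumes "gabriel R F" "left_ideal R J" "I \<in> F" "\<And>a. a \<in> I \<Longrightarrow> lquot R J a \<in> F"
  shows "J \<in> F"
  using assms unfolding gabriel_def by (metis (no_types, lifting))

lemma gabriel_left_ideals: "gabriel R {I. left_ideal R I}"
  unfolding gabriel_def by (auto simp: left_ideal_carrier left_ideal_Int left_ideal_lquot)

lemma gabriel_Inter:
  assumes "S \<noteq> {}" and gabriel: "\<And>F. F \<in> S \<Longrightarrow> gabriel R F"
  shows "gabriel R (\<Inter>S)"
  unfolding gabriel_def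
proof (intro conjI ballI allI impI)
  fix I assume "I \<in> \<Inter>S"
  then show "left_ideal R I" using assms gabriel_left_ideal by blast
next
  show "carrier R \<in> \<Inter>S" using gabriel gabriel_carrier by blast
next
  fix I J assume "I \<in> \<Inter>S" "left_ideal R J \<and> I \<subseteq> J"
  then show "J \<in> \<Inter>S" using gabriel gabriel_upward by blast
next
  fix I J assume "I \<in> \<Inter>S" "J \<in> \<Inter>S"
  then show "I \<inter> J \<in> \<Inter>S" using gabriel gabriel_Int_mem by blast
next
  fix I a assume "I \<in> \<Inter>S" "a \<in> carrier R"
  then show "lquot R I a \<in> \<Inter>S" using gabriel gabriel_lquot by blast
next
  fix J assume "left_ideal R J \<and> (\<exists>I\<in>\<Inter>S. \<forall>a\<in>I. lquot R J a \<in> \<Inter>S)"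
  then obtain I where "left_ideal R J" "I \<in> \<Inter>S" "\<And>a. a \<in> I \<Longrightarrow> lquot R J a \<in> \<Inter>S" by blast
  then show "J \<in> \<Inter>S" using gabriel gabriel_transitive by (metis InterD InterI)
qed

lemma gabriel_Int: "gabriel R A \<Longrightarrow> gabriel R B \<Longrightarrow> gabriel R (A \<inter> B)"
  using gabriel_Inter[of "{A, B}"] by auto

lemma gabriel_tors_join:
  assumes "gabriel R A" "gabriel R B"
  shows "gabriel R (tors_join R A B)"
  unfolding tors_join_def
proof (rule gabriel_Inter)
  show "{G. gabriel R G \<and> A \<union> B \<subseteq> G} \<noteq> {}"
    using gabriel_left_ideals assms gabriel_left_ideal by blast
qed auto

lemma tors_join_upper: "A \<subseteq> tors_join R A B" "B \<subseteq> tors_join R A B"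
  unfolding tors_join_def by auto

lemma tors_join_least: "gabriel R C \<Longrightarrow> A \<subseteq> C \<Longrightarrow> B \<subseteq> C \<Longrightarrow> tors_join R A B \<subseteq> C"
  unfolding tors_join_def by blast

end

locale left_mod =
  fixes R :: "('a, 'c) ring_scheme" and M :: "('a, 'b, 'd) module_scheme"
  assumes left_module: "left_module R M"
begin

sublocale R: ring R
  using left_module unfolding left_module_def by simp

sublocale M: abelian_group M
  using left_module unfolding left_module_def by simp

lemma smult_closed: "r \<in> carrier R \<Longrightarrow> x \<in> carrier M \<Longrightarrow> r \<odot>\<^bsub>M\<^esub> x \<in> carrier M"
  and smult_l_distr: "r \<in> carrier R \<Longrightarrow> s \<in> carrier R \<Longrightarrow> x \<in> carrier M \<Longrightarrow>
      (r \<oplus>\<^bsub>R\<^esub> s) \<odot>\<^bsub>M\<^esub> x = r \<odot>\<^bsub>M\<^esub> x \<oplus>\<^bsub>M\<^esub> s \<odot>\<^bsub>M\<^esub> x"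
  and smult_r_distr: "r \<in> carrier R \<Longrightarrow> x \<in> carrier M \<Longrightarrow> y \<in> carrier M \<Longrightarrow>
      r \<odot>\<^bsub>M\<^esub> (x \<oplus>\<^bsub>M\<^esub> y) = r \<odot>\<^bsub>M\<^esub> x \<oplus>\<^bsub>M\<^esub> r \<odot>\<^bsub>M\<^esub> y"
  and smult_assoc1: "r \<in> carrier R \<Longrightarrow> s \<in> carrier R \<Longrightarrow> x \<in> carrier M \<Longrightarrow>
      (r \<otimes>\<^bsub>R\<^esub> s) \<odot>\<^bsub>M\<^esub> x = r \<odot>\<^bsub>M\<^esub> (s \<odot>\<^bsub>M\<^esub> x)"
  and smult_one: "x \<in> carrier M \<Longrightarrow> \<one>\<^bsub>R\<^esub> \<odot>\<^bsub>M\<^esub> x = x"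
  using left_module unfolding left_module_def module_axioms_def by auto

lemma smult_l_null: assumes "x \<in> carrier M" shows "\<zero>\<^bsub>R\<^esub> \<odot>\<^bsub>M\<^esub> x = \<zero>\<^bsub>M\<^esub>"
proof -
  have c: "\<zero>\<^bsub>R\<^esub> \<odot>\<^bsub>M\<^esub> x \<in> carrier M" using assms by (simp add: smult_closed)
  have "\<zero>\<^bsub>R\<^esub> \<odot>\<^bsub>M\<^esub> x = (\<zero>\<^bsub>R\<^esub> \<oplus>\<^bsub>R\<^esub> \<zero>\<^bsub>R\<^esub>) \<odot>\<^bsub>M\<^esub> x" by simp
  also have "\<dots> = \<zero>\<^bsub>R\<^esub> \<odot>\<^bsub>M\<^esub> x \<oplus>\<^bsub>M\<^esub> \<zero>\<^bsub>R\<^esub> \<odot>\<^bsub>M\<^esub> x"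
    using assms by (intro smult_l_distr) auto
  finally show ?thesis using M.add.l_cancel_one[OF c c] by simp
qed

lemma smult_r_null: assumes "r \<in> carrier R" shows "r \<odot>\<^bsub>M\<^esub> \<zero>\<^bsub>M\<^esub> = \<zero>\<^bsub>M\<^esub>"
proof -
  have c: "r \<odot>\<^bsub>M\<^esub> \<zero>\<^bsub>M\<^esub> \<in> carrier M" using assms by (simp add: smult_closed)
  have "r \<odot>\<^bsub>M\<^esub> \<zero>\<^bsub>M\<^esub> = r \<odot>\<^bsub>M\<^esub> (\<zero>\<^bsub>M\<^esub> \<oplus>\<^bsub>M\<^esub> \<zero>\<^bsub>M\<^esub>)" by simp
  also have "\<dots> = r \<odot>\<^bsub>M\<^esub> \<zero>\<^bsub>M\<^esub> \<oplus>\<^bsub>M\<^esub> r \<odot>\<^bsub>M\<^esub> \<zero>\<^bsub>M\<^esub>"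
    using assms by (intro smult_r_distr) auto
  finally show ?thesis using M.add.l_cancel_one[OF c c] by simp
qed

lemma smult_l_minus: assumes "r \<in> carrier R" "x \<in> carrier M"
  shows "(\<ominus>\<^bsub>R\<^esub> r) \<odot>\<^bsub>M\<^esub> x = \<ominus>\<^bsub>M\<^esub> (r \<odot>\<^bsub>M\<^esub> x)"
proof -
  have "(\<ominus>\<^bsub>R\<^esub> r) \<odot>\<^bsub>M\<^esub> x \<oplus>\<^bsub>M\<^esub> r \<odot>\<^bsub>M\<^esub> x = ((\<ominus>\<^bsub>R\<^esub> r) \<oplus>\<^bsub>R\<^esub> r) \<odot>\<^bsub>M\<^esub> x"
    using assms by (intro smult_l_distr[symmetric]) auto
  also have "\<dots> = \<zero>\<^bsub>M\<^esub>" using assms by (simp add: R.l_neg smult_l_null)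
  finally show ?thesis using assms by (metis M.minus_equality R.a_inv_closed smult_closed)
qed

lemma smult_r_minus: assumes "r \<in> carrier R" "x \<in> carrier M"
  shows "r \<odot>\<^bsub>M\<^esub> (\<ominus>\<^bsub>M\<^esub> x) = \<ominus>\<^bsub>M\<^esub> (r \<odot>\<^bsub>M\<^esub> x)"
proof -
  have "r \<odot>\<^bsub>M\<^esub> (\<ominus>\<^bsub>M\<^esub> x) \<oplus>\<^bsub>M\<^esub> r \<odot>\<^bsub>M\<^esub> x = r \<odot>\<^bsub>M\<^esub> ((\<ominus>\<^bsub>M\<^esub> x) \<oplus>\<^bsub>M\<^esub> x)"
    using assms by (intro smult_r_distr[symmetric]) auto
  also have "\<dots> = \<zero>\<^bsub>M\<^esub>" using assms by (simp add: M.l_neg smult_r_null)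
  finally show ?thesis using assms by (metis M.minus_equality M.a_inv_closed smult_closed)
qed

lemma left_submoduleI:
  assumes "N \<subseteq> carrier M" "\<zero>\<^bsub>M\<^esub> \<in> N" "\<And>x y. x \<in> N \<Longrightarrow> y \<in> N \<Longrightarrow> x \<oplus>\<^bsub>M\<^esub> y \<in> N"
    "\<And>x. x \<in> N \<Longrightarrow> \<ominus>\<^bsub>M\<^esub> x \<in> N" "\<And>r x. r \<in> carrier R \<Longrightarrow> x \<in> N \<Longrightarrow> r \<odot>\<^bsub>M\<^esub> x \<in> N"
  shows "left_submodule R M N"
  unfolding left_submodule_def
proof (intro conjI ballI)
  show "subgroup N (add_monoid M)"
    by (rule M.add.subgroupI) (use assms in \<open>auto simp: a_inv_def[symmetric]\<close>)
qed (use assms in auto)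

lemma ann_left_ideal: assumes "x \<in> carrier M" shows "left_ideal R (ann R M x)"
proof (rule R.left_idealI)
  show "ann R M x \<subseteq> carrier R" "\<zero>\<^bsub>R\<^esub> \<in> ann R M x"
    unfolding ann_def using assms smult_l_null by auto
  show "a \<oplus>\<^bsub>R\<^esub> b \<in> ann R M x" if "a \<in> ann R M x" "b \<in> ann R M x" for a b
    using that assms unfolding ann_def by (simp add: smult_l_distr)
  show "\<ominus>\<^bsub>R\<^esub> a \<in> ann R M x" if "a \<in> ann R M x" for a
    using that assms unfolding ann_def by (simp add: smult_l_minus)
  show "r \<otimes>\<^bsub>R\<^esub> a \<in> ann R M x" if "r \<in> carrier R" "a \<in> ann R M x" for r a
    using that assms unfolding ann_def by (simp add: smult_assoc1 smult_r_null)
qed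

lemma ann_smult: "r \<in> carrier R \<Longrightarrow> x \<in> carrier M \<Longrightarrow> ann R M (r \<odot>\<^bsub>M\<^esub> x) = lquot R (ann R M x) r"
  unfolding ann_def lquot_def by (auto simp: smult_assoc1)

lemma ann_add: "x \<in> carrier M \<Longrightarrow> y \<in> carrier M \<Longrightarrow> ann R M x \<inter> ann R M y \<subseteq> ann R M (x \<oplus>\<^bsub>M\<^esub> y)"
  unfolding ann_def by (auto simp: smult_r_distr)

lemma ann_minus: "x \<in> carrier M \<Longrightarrow> ann R M x \<subseteq> ann R M (\<ominus>\<^bsub>M\<^esub> x)"
  unfolding ann_def by (auto simp: smult_r_minus)

lemma ann_zero: "ann R M \<zero>\<^bsub>M\<^esub> = carrier R"
  unfolding ann_def by (auto simp: smult_r_null)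

lemma gabriel_ann_upward:
  "gabriel R F \<Longrightarrow> I \<in> F \<Longrightarrow> x \<in> carrier M \<Longrightarrow> I \<subseteq> ann R M x \<Longrightarrow> ann R M x \<in> F"
  using R.gabriel_upward ann_left_ideal by blast

definition torsion_part :: "'a set set \<Rightarrow> 'b set" where
  "torsion_part F = {m \<in> carrier M. ann R M m \<in> F}"

lemma left_submodule_torsion_part:
  assumes F: "gabriel R F"
  shows "left_submodule R M (torsion_part F)"
proof (rule left_submoduleI)
  show "torsion_part F \<subseteq> carrier M" "\<zero>\<^bsub>M\<^esub> \<in> torsion_part F"
    unfolding torsion_part_def using ann_zero R.gabriel_carrier[OF F] by auto
  show "x \<oplus>\<^bsub>M\<^esub> y \<in> torsion_part F" if "x \<in> torsion_part F" "y \<in> torsion_part F" for x y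
  proof -
    have "x \<in> carrier M" "y \<in> carrier M" "ann R M x \<inter> ann R M y \<in> F"
      using that R.gabriel_Int_mem[OF F] unfolding torsion_part_def by auto
    then show ?thesis
      using gabriel_ann_upward[OF F] ann_add unfolding torsion_part_def by auto
  qed
  show "\<ominus>\<^bsub>M\<^esub> x \<in> torsion_part F" if "x \<in> torsion_part F" for x
    using that gabriel_ann_upward[OF F] ann_minus unfolding torsion_part_def by auto
  show "r \<odot>\<^bsub>M\<^esub> x \<in> torsion_part F" if "r \<in> carrier R" "x \<in> torsion_part F" for r x
    using that R.gabriel_lquot[OF F] ann_smult smult_closed unfolding torsion_part_def by auto
qed

lemma xi_characterization:
  shows gabriel_xi: "gabriel R (xi R M)"
    and is_torsion_xi: "is_torsion R (xi R M) M"
    and xi_least: "gabriel R F \<Longrightarrow> is_torsion R F M \<Longrightarrow> xi R M \<subseteq> F"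
proof -
  define T where "T = \<Inter>{F. gabriel R F \<and> is_torsion R F M}"
  have "{I. left_ideal R I} \<in> {F. gabriel R F \<and> is_torsion R F M}"
    using R.gabriel_left_ideals ann_left_ideal unfolding is_torsion_def by auto
  then have gabriel: "gabriel R T" unfolding T_def by (intro R.gabriel_Inter) auto
  have torsion: "is_torsion R T M" unfolding T_def is_torsion_def by auto
  have least: "T \<subseteq> F" if "gabriel R F" "is_torsion R F M" for F
    using that unfolding T_def by auto
  have "xi R M = T" unfolding xi_def
    by (rule Least_equality) (use gabriel torsion least in auto)
  then show "gabriel R (xi R M)" "is_torsion R (xi R M) M"
    "gabriel R F \<Longrightarrow> is_torsion R F M \<Longrightarrow> xi R M \<subseteq> F"
    using gabriel torsion least by auto
qed

lemma xi_subset_iff_torsion: "gabriel R F \<Longrightarrow> xi R M \<subseteq> F \<longleftrightarrow> is_torsion R F M"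
  using is_torsion_xi xi_least unfolding is_torsion_def by blast

definition linear_on :: "'a set \<Rightarrow> ('a \<Rightarrow> 'b) \<Rightarrow> bool" where
  "linear_on K f \<longleftrightarrow> (\<forall>x\<in>K. f x \<in> carrier M) \<and>
     (\<forall>x\<in>K. \<forall>y\<in>K. f (x \<oplus>\<^bsub>R\<^esub> y) = f x \<oplus>\<^bsub>M\<^esub> f y) \<and>
     (\<forall>r\<in>carrier R. \<forall>x\<in>K. f (r \<otimes>\<^bsub>R\<^esub> x) = r \<odot>\<^bsub>M\<^esub> f x)"

lemma linear_onD:
  assumes "linear_on K f"
  shows "x \<in> K \<Longrightarrow> f x \<in> carrier M"
    and "x \<in> K \<Longrightarrow> y \<in> K \<Longrightarrow> f (x \<oplus>\<^bsub>R\<^esub> y) = f x \<oplus>\<^bsub>M\<^esub> f y"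
    and "r \<in> carrier R \<Longrightarrow> x \<in> K \<Longrightarrow> f (r \<otimes>\<^bsub>R\<^esub> x) = r \<odot>\<^bsub>M\<^esub> f x"
  using assms unfolding linear_on_def by blast+

lemma linear_on_subset: "linear_on K f \<Longrightarrow> K' \<subseteq> K \<Longrightarrow> linear_on K' f"
  unfolding linear_on_def by blast

lemma linear_on_cyclic: "x \<in> carrier M \<Longrightarrow> linear_on (carrier R) (\<lambda>r. r \<odot>\<^bsub>M\<^esub> x)"
  unfolding linear_on_def by (auto simp: smult_closed smult_l_distr smult_assoc1)

lemma linear_on_mult_right:
  assumes K: "left_ideal R K" and f: "linear_on K f" and a: "a \<in> K"
  shows "linear_on (carrier R) (\<lambda>r. f (r \<otimes>\<^bsub>R\<^esub> a))"
proof -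
  note K = R.left_idealD[OF K]
  have "a \<in> carrier R" using K(1) a by blast
  then show ?thesis
    unfolding linear_on_def using K(5) a linear_onD[OF f]
    by (auto simp: R.l_distr R.m_assoc smult_closed)
qed

lemma linear_on_factor_mult_right:
  assumes K: "left_ideal R K" and f: "linear_on K f" and a: "a \<in> carrier R"
    and kills: "\<And>k. k \<in> K \<Longrightarrow> k \<otimes>\<^bsub>R\<^esub> a = \<zero>\<^bsub>R\<^esub> \<Longrightarrow> f k = \<zero>\<^bsub>M\<^esub>"
  obtains g where "linear_on ((\<lambda>k. k \<otimes>\<^bsub>R\<^esub> a) ` K) g" "\<And>k. k \<in> K \<Longrightarrow> g (k \<otimes>\<^bsub>R\<^esub> a) = f k"
proof
  note K = R.left_idealD[OF K]
  define g where "g y = f (SOME k. k \<in> K \<and> y = k \<otimes>\<^bsub>R\<^esub> a)" for y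
  show g: "g (k \<otimes>\<^bsub>R\<^esub> a) = f k" if k: "k \<in> K" for k
  proof -
    define k' where "k' = (SOME k'. k' \<in> K \<and> k \<otimes>\<^bsub>R\<^esub> a = k' \<otimes>\<^bsub>R\<^esub> a)"
    have "k' \<in> K \<and> k \<otimes>\<^bsub>R\<^esub> a = k' \<otimes>\<^bsub>R\<^esub> a"
      unfolding k'_def by (rule someI[of _ k]) (use k in simp)
    then have k': "k' \<in> K" "k \<otimes>\<^bsub>R\<^esub> a = k' \<otimes>\<^bsub>R\<^esub> a" by auto
    have carrier: "k \<in> carrier R" "k' \<in> carrier R" using K(1) k k' by auto
    \<comment> \<open>\<open>g\<close> is well defined: \<open>k \<ominus> k'\<close> is killed by \<open>a\<close>, hence by \<open>f\<close>\<close>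
    have diff: "k \<ominus>\<^bsub>R\<^esub> k' \<in> K"
      unfolding a_minus_def using K(3,4) k k' by blast
    have "(k \<ominus>\<^bsub>R\<^esub> k') \<otimes>\<^bsub>R\<^esub> a = \<zero>\<^bsub>R\<^esub>"
      using k' carrier a by (simp add: a_minus_def R.l_distr R.l_minus R.r_neg)
    then have "f (k \<ominus>\<^bsub>R\<^esub> k') = \<zero>\<^bsub>M\<^esub>" using kills diff by blast
    moreover have "k = k' \<oplus>\<^bsub>R\<^esub> (k \<ominus>\<^bsub>R\<^esub> k')"
      using carrier unfolding a_minus_def by (metis R.a_inv_closed R.a_lcomm R.r_neg R.r_zero)
    ultimately have "f k = f k'"
      using linear_onD(1,2)[OF f] k'(1) diff by (metis M.r_zero)
    then show ?thesis unfolding g_def k'_def by simp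
  qed
  show "linear_on ((\<lambda>k. k \<otimes>\<^bsub>R\<^esub> a) ` K) g"
    unfolding linear_on_def
  proof (intro conjI ballI)
    fix y assume "y \<in> (\<lambda>k. k \<otimes>\<^bsub>R\<^esub> a) ` K"
    then show "g y \<in> carrier M" using g linear_onD(1)[OF f] by auto
  next
    fix y z assume "y \<in> (\<lambda>k. k \<otimes>\<^bsub>R\<^esub> a) ` K" "z \<in> (\<lambda>k. k \<otimes>\<^bsub>R\<^esub> a) ` K"
    then obtain k k' where kk: "k \<in> K" "k' \<in> K" "y = k \<otimes>\<^bsub>R\<^esub> a" "z = k' \<otimes>\<^bsub>R\<^esub> a" by auto
    then have "y \<oplus>\<^bsub>R\<^esub> z = (k \<oplus>\<^bsub>R\<^esub> k') \<otimes>\<^bsub>R\<^esub> a" using K(1) a by (simp add: R.l_distr subsetD)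
    then show "g (y \<oplus>\<^bsub>R\<^esub> z) = g y \<oplus>\<^bsub>M\<^esub> g z"
      using kk g K(3) linear_onD(2)[OF f] by simp
  next
    fix r y assume r: "r \<in> carrier R" and "y \<in> (\<lambda>k. k \<otimes>\<^bsub>R\<^esub> a) ` K"
    then obtain k where kk: "k \<in> K" "y = k \<otimes>\<^bsub>R\<^esub> a" by auto
    then have "r \<otimes>\<^bsub>R\<^esub> y = (r \<otimes>\<^bsub>R\<^esub> k) \<otimes>\<^bsub>R\<^esub> a" using K(1) a r by (simp add: R.m_assoc subsetD)
    then show "g (r \<otimes>\<^bsub>R\<^esub> y) = r \<odot>\<^bsub>M\<^esub> g y"
      using kk g K(5)[OF r] linear_onD(3)[OF f r] by simp
  qed
qed

text \<open>An explicit description of \<open>\<chi>(M)\<close> that avoids injective hulls: \<open>I\<close> belongs to it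
  iff no nonzero homomorphism from a left ideal \<open>K\<close> to \<open>M\<close> vanishes on \<open>K \<inter> I\<close>.
  Such a description is needed because \<open>chi\<close> is defined by \<open>GREATEST\<close>, which is junk unless
  a greatest element is exhibited.\<close>

definition chi_filter :: "'a set set" where
  "chi_filter = {I. left_ideal R I \<and> (\<forall>K f. left_ideal R K \<and> linear_on K f \<and>
      (\<forall>x\<in>K \<inter> I. f x = \<zero>\<^bsub>M\<^esub>) \<longrightarrow> (\<forall>x\<in>K. f x = \<zero>\<^bsub>M\<^esub>))}"

lemma chi_filterI:
  assumes "left_ideal R I"
    and "\<And>K f x. left_ideal R K \<Longrightarrow> linear_on K f \<Longrightarrow> (\<And>y. y \<in> K \<Longrightarrow> y \<in> I \<Longrightarrow> f y = \<zero>\<^bsub>M\<^esub>)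
      \<Longrightarrow> x \<in> K \<Longrightarrow> f x = \<zero>\<^bsub>M\<^esub>"
  shows "I \<in> chi_filter"
  using assms unfolding chi_filter_def by blast

lemma chi_filterD:
  assumes "I \<in> chi_filter"
  shows "left_ideal R I"
    and "left_ideal R K \<Longrightarrow> linear_on K f \<Longrightarrow> (\<And>y. y \<in> K \<Longrightarrow> y \<in> I \<Longrightarrow> f y = \<zero>\<^bsub>M\<^esub>)
      \<Longrightarrow> x \<in> K \<Longrightarrow> f x = \<zero>\<^bsub>M\<^esub>"
  using assms unfolding chi_filter_def by blast+

lemma carrier_in_chi_filter: "carrier R \<in> chi_filter"
  by (rule chi_filterI[OF R.left_ideal_carrier]) (use R.left_idealD(1) in blast)

lemma chi_filter_upward:
  "I \<in> chi_filter \<Longrightarrow> left_ideal R J \<Longrightarrow> I \<subseteq> J \<Longrightarrow> J \<in> chi_filter"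
  by (rule chi_filterI) (auto dest: chi_filterD)

lemma chi_filter_Int:
  assumes I: "I \<in> chi_filter" and J: "J \<in> chi_filter"
  shows "I \<inter> J \<in> chi_filter"
proof (rule chi_filterI)
  show "left_ideal R (I \<inter> J)" using R.left_ideal_Int chi_filterD(1) I J by blast
  fix K f x assume K: "left_ideal R K" and f: "linear_on K f"
    and kills: "\<And>y. y \<in> K \<Longrightarrow> y \<in> I \<inter> J \<Longrightarrow> f y = \<zero>\<^bsub>M\<^esub>" and x: "x \<in> K"
  have "left_ideal R (K \<inter> I)" using R.left_ideal_Int K chi_filterD(1)[OF I] by blast
  then have "f y = \<zero>\<^bsub>M\<^esub>" if "y \<in> K \<inter> I" for y
    using chi_filterD(2)[OF J _ linear_on_subset[OF f]] kills that by blast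
  then show "f x = \<zero>\<^bsub>M\<^esub>" using chi_filterD(2)[OF I K f _ x] by blast
qed

lemma chi_filter_lquot:
  assumes I: "I \<in> chi_filter" and a: "a \<in> carrier R"
  shows "lquot R I a \<in> chi_filter"
proof (rule chi_filterI)
  show "left_ideal R (lquot R I a)" by (rule R.left_ideal_lquot[OF chi_filterD(1)[OF I] a])
  fix K f x assume K: "left_ideal R K" and f: "linear_on K f"
    and kills: "\<And>y. y \<in> K \<Longrightarrow> y \<in> lquot R I a \<Longrightarrow> f y = \<zero>\<^bsub>M\<^esub>" and x: "x \<in> K"
  have "k \<in> lquot R I a" if "k \<in> K" "k \<otimes>\<^bsub>R\<^esub> a = \<zero>\<^bsub>R\<^esub>" for k
    using that R.left_idealD(1,2)[OF K] R.left_idealD(2)[OF chi_filterD(1)[OF I]]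
    unfolding lquot_def by auto
  then obtain g where g: "linear_on ((\<lambda>k. k \<otimes>\<^bsub>R\<^esub> a) ` K) g" "\<And>k. k \<in> K \<Longrightarrow> g (k \<otimes>\<^bsub>R\<^esub> a) = f k"
    using linear_on_factor_mult_right[OF K f a] kills by blast
  have "g (x \<otimes>\<^bsub>R\<^esub> a) = \<zero>\<^bsub>M\<^esub>"
  proof (rule chi_filterD(2)[OF I R.left_ideal_image_mult_right[OF K a] g(1)])
    fix y assume "y \<in> (\<lambda>k. k \<otimes>\<^bsub>R\<^esub> a) ` K" "y \<in> I"
    then obtain k where "k \<in> K" "y = k \<otimes>\<^bsub>R\<^esub> a" "k \<otimes>\<^bsub>R\<^esub> a \<in> I" by auto
    then show "g y = \<zero>\<^bsub>M\<^esub>"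
      using g(2) kills R.left_idealD(1)[OF K] unfolding lquot_def by auto
  qed (use x in auto)
  then show "f x = \<zero>\<^bsub>M\<^esub>" using g(2)[OF x] by simp
qed

lemma chi_filter_transitive:
  assumes J: "left_ideal R J" and I: "I \<in> chi_filter"
    and lquot: "\<And>a. a \<in> I \<Longrightarrow> lquot R J a \<in> chi_filter"
  shows "J \<in> chi_filter"
proof (rule chi_filterI[OF J])
  fix K f x assume K: "left_ideal R K" and f: "linear_on K f"
    and kills: "\<And>y. y \<in> K \<Longrightarrow> y \<in> J \<Longrightarrow> f y = \<zero>\<^bsub>M\<^esub>" and x: "x \<in> K"
  have "f a = \<zero>\<^bsub>M\<^esub>" if a: "a \<in> K" "a \<in> I" for a
  proof -
    have "f (\<one>\<^bsub>R\<^esub> \<otimes>\<^bsub>R\<^esub> a) = \<zero>\<^bsub>M\<^esub>"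
    proof (rule chi_filterD(2)[OF lquot[OF a(2)] R.left_ideal_carrier linear_on_mult_right[OF K f a(1)]])
      fix r assume "r \<in> carrier R" "r \<in> lquot R J a"
      then show "f (r \<otimes>\<^bsub>R\<^esub> a) = \<zero>\<^bsub>M\<^esub>"
        using kills R.left_idealD(5)[OF K] a(1) unfolding lquot_def by blast
    qed simp
    then show ?thesis using R.left_idealD(1)[OF K] a(1) by auto
  qed
  then show "f x = \<zero>\<^bsub>M\<^esub>" using chi_filterD(2)[OF I K f _ x] by blast
qed

lemma gabriel_chi_filter: "gabriel R chi_filter"
  unfolding gabriel_def
proof (intro conjI ballI allI impI)
  show "left_ideal R I" if "I \<in> chi_filter" for I
    using that by (rule chi_filterD(1))
  show "J \<in> chi_filter" if "I \<in> chi_filter" "left_ideal R J \<and> I \<subseteq> J" for I J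
    using that chi_filter_upward by blast
  show "J \<in> chi_filter" if "left_ideal R J \<and> (\<exists>I\<in>chi_filter. \<forall>a\<in>I. lquot R J a \<in> chi_filter)" for J
    using that chi_filter_transitive by blast
qed (auto intro: carrier_in_chi_filter chi_filter_Int chi_filter_lquot)

lemma is_torsionfree_chi_filter: "is_torsionfree R chi_filter M"
  unfolding is_torsionfree_def
proof (intro ballI impI)
  fix x assume x: "x \<in> carrier M" and ann: "ann R M x \<in> chi_filter"
  have "\<one>\<^bsub>R\<^esub> \<odot>\<^bsub>M\<^esub> x = \<zero>\<^bsub>M\<^esub>"
    by (rule chi_filterD(2)[OF ann R.left_ideal_carrier linear_on_cyclic[OF x]])
      (auto simp: ann_def)
  then show "x = \<zero>\<^bsub>M\<^esub>" using x by (simp add: smult_one)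
qed

lemma chi_filter_greatest:
  assumes F: "gabriel R F" and tf: "is_torsionfree R F M"
  shows "F \<subseteq> chi_filter"
proof
  fix I assume I: "I \<in> F"
  show "I \<in> chi_filter"
  proof (rule chi_filterI[OF R.gabriel_left_ideal[OF F I]])
    fix K f x assume K: "left_ideal R K" and f: "linear_on K f"
      and kills: "\<And>y. y \<in> K \<Longrightarrow> y \<in> I \<Longrightarrow> f y = \<zero>\<^bsub>M\<^esub>" and x: "x \<in> K"
    have "x \<in> carrier R" using x R.left_idealD(1)[OF K] by auto
    moreover have "lquot R I x \<subseteq> ann R M (f x)"
    proof
      fix r assume "r \<in> lquot R I x"
      then have r: "r \<in> carrier R" "r \<otimes>\<^bsub>R\<^esub> x \<in> I" unfolding lquot_def by auto
      then have "r \<odot>\<^bsub>M\<^esub> f x = \<zero>\<^bsub>M\<^esub>"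
        using kills R.left_idealD(5)[OF K r(1) x] linear_onD(3)[OF f r(1) x] by simp
      then show "r \<in> ann R M (f x)" using r(1) unfolding ann_def by simp
    qed
    ultimately have "ann R M (f x) \<in> F"
      using gabriel_ann_upward[OF F R.gabriel_lquot[OF F I]] linear_onD(1)[OF f x] by blast
    then show "f x = \<zero>\<^bsub>M\<^esub>" using tf linear_onD(1)[OF f x] unfolding is_torsionfree_def by blast
  qed
qed

lemma chi_characterization:
  shows gabriel_chi: "gabriel R (chi R M)"
    and is_torsionfree_chi: "is_torsionfree R (chi R M) M"
    and chi_greatest: "gabriel R F \<Longrightarrow> is_torsionfree R F M \<Longrightarrow> F \<subseteq> chi R M"
proof -
  have "chi R M = chi_filter" unfolding chi_def
    by (rule Greatest_equality)
      (use gabriel_chi_filter is_torsionfree_chi_filter chi_filter_greatest in auto)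
  then show "gabriel R (chi R M)" "is_torsionfree R (chi R M) M"
    "gabriel R F \<Longrightarrow> is_torsionfree R F M \<Longrightarrow> F \<subseteq> chi R M"
    using gabriel_chi_filter is_torsionfree_chi_filter chi_filter_greatest by auto
qed

end

locale left_mod_quotient = left_mod +
  fixes N assumes submodule: "left_submodule R M N"
begin

abbreviation Q where "Q \<equiv> quot_module R M N"

sublocale N: abelian_subgroup N M
  using submodule unfolding left_submodule_def
  by (intro abelian_subgroupI3 M.abelian_group_axioms) (simp add: additive_subgroup_def)

lemma submodule_smult: "r \<in> carrier R \<Longrightarrow> x \<in> N \<Longrightarrow> r \<odot>\<^bsub>M\<^esub> x \<in> N"
  using submodule unfolding left_submodule_def by simp

lemma carrier_quot: "carrier Q = (\<lambda>x. N +>\<^bsub>M\<^esub> x) ` carrier M"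
  unfolding quot_module_def by (auto simp: A_RCOSETS_def'[of M N])

lemma quot_cases:
  assumes "U \<in> carrier Q" obtains x where "x \<in> carrier M" "U = N +>\<^bsub>M\<^esub> x"
  using assms unfolding carrier_quot by auto

lemma coset_in_quot: "x \<in> carrier M \<Longrightarrow> N +>\<^bsub>M\<^esub> x \<in> carrier Q"
  unfolding carrier_quot by auto

lemma zero_quot: "\<zero>\<^bsub>Q\<^esub> = N"
  unfolding quot_module_def by simp

lemma coset_eq_zero_quot: "x \<in> carrier M \<Longrightarrow> N +>\<^bsub>M\<^esub> x = \<zero>\<^bsub>Q\<^esub> \<longleftrightarrow> x \<in> N"
  unfolding zero_quot using N.a_rcos_const N.a_rcos_self by metis

lemma coset_add: "x \<in> carrier M \<Longrightarrow> y \<in> carrier M \<Longrightarrow>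
    (N +>\<^bsub>M\<^esub> x) \<oplus>\<^bsub>Q\<^esub> (N +>\<^bsub>M\<^esub> y) = N +>\<^bsub>M\<^esub> (x \<oplus>\<^bsub>M\<^esub> y)"
  using N.a_rcos_sum unfolding quot_module_def by simp

lemma coset_smult:
  assumes r: "r \<in> carrier R" and x: "x \<in> carrier M"
  shows "r \<odot>\<^bsub>Q\<^esub> (N +>\<^bsub>M\<^esub> x) = N +>\<^bsub>M\<^esub> (r \<odot>\<^bsub>M\<^esub> x)"
proof -
  have "N +>\<^bsub>M\<^esub> (r \<odot>\<^bsub>M\<^esub> m) = N +>\<^bsub>M\<^esub> (r \<odot>\<^bsub>M\<^esub> x)" if m: "m \<in> N +>\<^bsub>M\<^esub> x" for m
  proof -
    obtain n where n: "n \<in> N" "m = n \<oplus>\<^bsub>M\<^esub> x"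
      using m unfolding a_r_coset_def'[of M N x] by auto
    have "n \<in> carrier M" using n(1) N.a_subset by auto
    then have "r \<odot>\<^bsub>M\<^esub> m = r \<odot>\<^bsub>M\<^esub> n \<oplus>\<^bsub>M\<^esub> r \<odot>\<^bsub>M\<^esub> x"
      using n(2) r x by (simp add: smult_r_distr)
    also have "\<dots> \<in> N +>\<^bsub>M\<^esub> (r \<odot>\<^bsub>M\<^esub> x)"
      using submodule_smult[OF r n(1)] r x by (intro M.a_rcosI) (auto simp: smult_closed)
    finally show ?thesis
      using M.a_repr_independence[OF _ _ N.a_subgroup] r x by (simp add: smult_closed)
  qed
  moreover have "x \<in> N +>\<^bsub>M\<^esub> x" using N.a_rcos_self x by simp
  moreover have "r \<odot>\<^bsub>Q\<^esub> (N +>\<^bsub>M\<^esub> x) = (\<Union>m \<in> N +>\<^bsub>M\<^esub> x. N +>\<^bsub>M\<^esub> (r \<odot>\<^bsub>M\<^esub> m))"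
    unfolding quot_module_def by simp
  ultimately show ?thesis by blast
qed

lemma left_module_quot: "left_module R Q"
  unfolding left_module_def
proof (intro conjI)
  show "ring R" ..
  \<comment> \<open>up to the record extension, the additive monoid of \<open>Q\<close> is \<open>M A_Mod N\<close>\<close>
  show "abelian_group Q"
    by (intro comm_group_abelian_groupI comm_group_cong[OF N.a_factorgroup_is_comm_group])
      (simp_all add: quot_module_def A_FactGroup_def' set_add_def)
  show "module_axioms R Q"
    by (rule module_axioms.intro)
      (auto elim!: quot_cases simp: coset_smult coset_add coset_in_quot smult_closed
        smult_l_distr smult_r_distr smult_assoc1 smult_one)
qed

lemma ann_coset:
  assumes x: "x \<in> carrier M"
  shows "ann R Q (N +>\<^bsub>M\<^esub> x) = {r \<in> carrier R. r \<odot>\<^bsub>M\<^esub> x \<in> N}"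
proof -
  have "r \<odot>\<^bsub>Q\<^esub> (N +>\<^bsub>M\<^esub> x) = \<zero>\<^bsub>Q\<^esub> \<longleftrightarrow> r \<odot>\<^bsub>M\<^esub> x \<in> N" if r: "r \<in> carrier R" for r
    using coset_smult[OF r x] coset_eq_zero_quot smult_closed[OF r x] by simp
  then show ?thesis unfolding ann_def by auto
qed

lemma ann_subset_ann_coset: "x \<in> carrier M \<Longrightarrow> ann R M x \<subseteq> ann R Q (N +>\<^bsub>M\<^esub> x)"
  unfolding ann_coset by (auto simp: ann_def)

end

context left_mod begin

lemma left_mod_quotient: "left_submodule R M N \<Longrightarrow> left_mod_quotient R M N"
  by (intro left_mod_quotient.intro left_mod_axioms left_mod_quotient_axioms.intro)

lemma left_mod_quot: "left_submodule R M N \<Longrightarrow> left_mod R (quot_module R M N)"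
  using left_mod_quotient.left_module_quot[OF left_mod_quotient] by (intro left_mod.intro)

lemma ann_quot_in_xi:
  assumes N: "left_submodule R M N" and U: "U \<in> carrier (quot_module R M N)"
  shows "ann R (quot_module R M N) U \<in> xi R M"
proof -
  interpret q: left_mod_quotient R M N by (rule left_mod_quotient[OF N])
  interpret Q: left_mod R "quot_module R M N" by (rule left_mod_quot[OF N])
  obtain x where x: "x \<in> carrier M" "U = N +>\<^bsub>M\<^esub> x" using U by (rule q.quot_cases)
  have "ann R M x \<in> xi R M" using is_torsion_xi x(1) unfolding is_torsion_def by blast
  then show ?thesis
    using R.gabriel_upward[OF gabriel_xi _ Q.ann_left_ideal[OF U]] q.ann_subset_ann_coset x by blast
qed

lemma is_torsionfree_quot_torsion_part:
  assumes F: "gabriel R F"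
  shows "is_torsionfree R F (quot_module R M (torsion_part F))"
  unfolding is_torsionfree_def
proof (intro ballI impI)
  let ?N = "torsion_part F"
  interpret q: left_mod_quotient R M ?N
    by (rule left_mod_quotient[OF left_submodule_torsion_part[OF F]])
  fix U assume U: "U \<in> carrier (quot_module R M ?N)" and ann: "ann R (quot_module R M ?N) U \<in> F"
  obtain x where x: "x \<in> carrier M" "U = ?N +>\<^bsub>M\<^esub> x" using U by (rule q.quot_cases)
  have "ann R M x \<in> F"
  proof (rule R.gabriel_transitive[OF F ann_left_ideal[OF x(1)]])
    show "{r \<in> carrier R. r \<odot>\<^bsub>M\<^esub> x \<in> ?N} \<in> F" using ann q.ann_coset x by simp
    fix r assume "r \<in> {r \<in> carrier R. r \<odot>\<^bsub>M\<^esub> x \<in> ?N}"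
    then show "lquot R (ann R M x) r \<in> F"
      using ann_smult x(1) unfolding torsion_part_def by auto
  qed
  then show "U = \<zero>\<^bsub>quot_module R M ?N\<^esub>"
    using x q.coset_eq_zero_quot unfolding torsion_part_def by auto
qed

lemma below_chi_quot_not_torsion:
  assumes N: "left_submodule R M N" "N \<subset> carrier M" and F: "F \<subseteq> chi R (quot_module R M N)"
  shows "\<not> is_torsion R F M"
proof
  assume torsion: "is_torsion R F M"
  interpret q: left_mod_quotient R M N by (rule left_mod_quotient[OF N(1)])
  interpret Q: left_mod R "quot_module R M N" by (rule left_mod_quot[OF N(1)])
  obtain x where x: "x \<in> carrier M" "x \<notin> N" using N(2) by auto
  have "ann R M x \<in> chi R (quot_module R M N)" using torsion x F unfolding is_torsion_def by auto
  then have "ann R (quot_module R M N) (N +>\<^bsub>M\<^esub> x) \<in> chi R (quot_module R M N)"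
    using Q.gabriel_ann_upward[OF Q.gabriel_chi _ q.coset_in_quot] q.ann_subset_ann_coset x(1)
    by blast
  then have "N +>\<^bsub>M\<^esub> x = \<zero>\<^bsub>quot_module R M N\<^esub>"
    using Q.is_torsionfree_chi q.coset_in_quot[OF x(1)] unfolding is_torsionfree_def by blast
  then show False using x q.coset_eq_zero_quot by simp
qed

lemma not_xi_subset_iff_below_chi_quot:
  assumes F: "gabriel R F"
  shows "\<not> xi R M \<subseteq> F \<longleftrightarrow>
    (\<exists>N. left_submodule R M N \<and> N \<subset> carrier M \<and> F \<subseteq> chi R (quot_module R M N))"
proof
  assume "\<not> xi R M \<subseteq> F"
  then have "\<not> is_torsion R F M" using xi_subset_iff_torsion[OF F] by simp
  then have proper: "torsion_part F \<subset> carrier M"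
    unfolding is_torsion_def torsion_part_def by auto
  interpret Q: left_mod R "quot_module R M (torsion_part F)"
    by (rule left_mod_quot[OF left_submodule_torsion_part[OF F]])
  have "F \<subseteq> chi R (quot_module R M (torsion_part F))"
    by (rule Q.chi_greatest[OF F is_torsionfree_quot_torsion_part[OF F]])
  then show "\<exists>N. left_submodule R M N \<and> N \<subset> carrier M \<and> F \<subseteq> chi R (quot_module R M N)"
    using left_submodule_torsion_part[OF F] proper by blast
next
  assume "\<exists>N. left_submodule R M N \<and> N \<subset> carrier M \<and> F \<subseteq> chi R (quot_module R M N)"
  then show "\<not> xi R M \<subseteq> F"
    using below_chi_quot_not_torsion xi_subset_iff_torsion[OF F] by blast
qed

lemma subset_chi_quot_if_Int_xi:
  assumes N: "left_submodule R M N" and C: "gabriel R C"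
    and Int: "xi R M \<inter> C \<subseteq> chi R (quot_module R M N)"
  shows "C \<subseteq> chi R (quot_module R M N)"
proof -
  interpret Q: left_mod R "quot_module R M N" by (rule left_mod_quot[OF N])
  have "is_torsionfree R C (quot_module R M N)"
    using ann_quot_in_xi[OF N] Int Q.is_torsionfree_chi unfolding is_torsionfree_def by blast
  then show ?thesis by (rule Q.chi_greatest[OF C])
qed

lemma directed_chi_quot_if_hollow_xi:
  assumes hollow: "hollow R (xi R M)"
  shows "directed_set {chi R (quot_module R M N) | N. left_submodule R M N \<and> N \<subset> carrier M}"
  unfolding directed_set_def
proof (intro ballI)
  let ?S = "{chi R (quot_module R M N) | N. left_submodule R M N \<and> N \<subset> carrier M}"
  fix C1 C2 assume "C1 \<in> ?S" "C2 \<in> ?S"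
  then obtain N1 N2 where
    N1: "left_submodule R M N1" "N1 \<subset> carrier M" "C1 = chi R (quot_module R M N1)" and
    N2: "left_submodule R M N2" "N2 \<subset> carrier M" "C2 = chi R (quot_module R M N2)"
    by blast
  have C: "gabriel R C1" "gabriel R C2"
    using left_mod.gabriel_chi[OF left_mod_quot] N1 N2 by auto
  define A where "A = xi R M \<inter> C1"
  define B where "B = xi R M \<inter> C2"
  have AB: "gabriel R A" "gabriel R B"
    unfolding A_def B_def using R.gabriel_Int[OF gabriel_xi] C by auto
  have "A \<subseteq> chi R (quot_module R M N1)" "B \<subseteq> chi R (quot_module R M N2)"
    unfolding A_def B_def N1(3) N2(3) by auto
  then have "\<not> xi R M \<subseteq> A" "\<not> xi R M \<subseteq> B"
    using not_xi_subset_iff_below_chi_quot[OF AB(1)] not_xi_subset_iff_below_chi_quot[OF AB(2)]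
      N1(1,2) N2(1,2) by blast+
  moreover have "A \<subseteq> xi R M" "B \<subseteq> xi R M" unfolding A_def B_def by auto
  ultimately have "\<not> xi R M \<subseteq> tors_join R A B"
    using hollow AB unfolding hollow_def by blast
  then obtain N3 where N3: "left_submodule R M N3" "N3 \<subset> carrier M"
    "tors_join R A B \<subseteq> chi R (quot_module R M N3)"
    using not_xi_subset_iff_below_chi_quot[OF R.gabriel_tors_join[OF AB]] by blast
  have "xi R M \<inter> C1 \<subseteq> chi R (quot_module R M N3)" "xi R M \<inter> C2 \<subseteq> chi R (quot_module R M N3)"
    using N3(3) R.tors_join_upper[where A = A and B = B] unfolding A_def B_def by auto
  then have "C1 \<subseteq> chi R (quot_module R M N3)" "C2 \<subseteq> chi R (quot_module R M N3)"
    using subset_chi_quot_if_Int_xi[OF N3(1)] C by auto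
  then show "\<exists>C\<in>?S. C1 \<subseteq> C \<and> C2 \<subseteq> C" using N3(1,2) by blast
qed

lemma hollow_xi_if_directed_chi_quot:
  assumes directed: "directed_set {chi R (quot_module R M N) | N. left_submodule R M N \<and> N \<subset> carrier M}"
  shows "hollow R (xi R M)"
  unfolding hollow_def
proof (intro conjI allI impI gabriel_xi)
  let ?S = "{chi R (quot_module R M N) | N. left_submodule R M N \<and> N \<subset> carrier M}"
  fix A B assume "gabriel R A \<and> gabriel R B \<and> A \<subseteq> xi R M \<and> B \<subseteq> xi R M \<and> xi R M \<subseteq> tors_join R A B"
  then have A: "gabriel R A" and B: "gabriel R B" and join: "xi R M \<subseteq> tors_join R A B" by auto
  show "xi R M \<subseteq> A \<or> xi R M \<subseteq> B"
  proof (rule ccontr)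
    assume "\<not> (xi R M \<subseteq> A \<or> xi R M \<subseteq> B)"
    then obtain N1 N2 where
      N1: "left_submodule R M N1" "N1 \<subset> carrier M" "A \<subseteq> chi R (quot_module R M N1)" and
      N2: "left_submodule R M N2" "N2 \<subset> carrier M" "B \<subseteq> chi R (quot_module R M N2)"
      using not_xi_subset_iff_below_chi_quot[OF A] not_xi_subset_iff_below_chi_quot[OF B] by auto
    have "chi R (quot_module R M N1) \<in> ?S" "chi R (quot_module R M N2) \<in> ?S"
      using N1(1,2) N2(1,2) by auto
    then obtain C where "C \<in> ?S" "chi R (quot_module R M N1) \<subseteq> C" "chi R (quot_module R M N2) \<subseteq> C"
      using directed unfolding directed_set_def by meson
    then obtain N3 where N3: "left_submodule R M N3" "N3 \<subset> carrier M"
      "A \<subseteq> chi R (quot_module R M N3)" "B \<subseteq> chi R (quot_module R M N3)"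
      using N1(3) N2(3) by blast
    have gabriel: "gabriel R (chi R (quot_module R M N3))"
      by (rule left_mod.gabriel_chi[OF left_mod_quot[OF N3(1)]])
    have "xi R M \<subseteq> chi R (quot_module R M N3)"
      using join R.tors_join_least[OF gabriel N3(3,4)] by blast
    then show False using not_xi_subset_iff_below_chi_quot[OF gabriel] N3(1,2) by blast
  qed
qed

end

theorem theorem4p4:
  fixes R :: "('a, 'c) ring_scheme" and M :: "('a, 'b, 'd) module_scheme"
  assumes "ring R" and "left_module R M"
  shows "hollow R (xi R M) \<longleftrightarrow>
    directed_set {chi R (quot_module R M N) | N. left_submodule R M N \<and> N \<subset> carrier M}"
proof -
  interpret left_mod R M by (rule left_mod.intro[OF assms(2)])
  show ?thesis
    using directed_chi_quot_if_hollow_xi hollow_xi_if_directed_chi_quot by blast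
qed

end
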